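(* In the setting described in the context, let $\sigma\in\mathcal{B}_2$ be a $\Sigma_m$-proximity on $A$. Then for all $x,y\in A$: $\sigma(x,y)=\sigma(y,x)$ (symmetry) and $\sigma(x,x)\ge\sigma(x,y)$ (egocentrism).
   Context: $A$ is a nonempty set (possibly infinite). $\mathcal{B}_1$ is a set of functions $A\to\mathbb{R}$ forming a real linear space containing all constant functions, and $\mu:\mathcal{B}_1\to\mathbb{R}$ is a linear functional with $\mu(c)=c$ for every constant function $c$ and monotone: if $f,g\in\mathcal{B}_1$ and $f(x)\ge g(x)$ for all $x$, then $\mu(f)\ge\mu(g)$. For $f:A^2\to\mathbb{R}$ such that $y\mapsto f(x,y)$ lies in $\mathcal{B}_1$ for every $x$, write $f(x,\cdot)=\mu(y\mapsto f(x,y))$, a function of $x$. $\mathcal{B}_2$ is a set of functions $A^2\to\mathbb{R}$ forming a real linear space that contains all constant functions and all functions $(x,y)\mapsto h(x)$ and $(x,y)\mapsto h(y)$ with $h\in\mathcal{B}_1$, and such that for every $f\in\mathcal{B}_2$: $y\mapsto f(x,y)\in\mathcal{B}_1$ for every $x\in A$, $x\mapsto f(x,\cdot)\in\mathcal{B}_1$, and $x\mapsto f(x,x)\in\mathcal{B}_1$. For $m\in\mathbb{R}$, a function $\sigma\in\mathcal{B}_2$ is a $\Sigma_m$-proximity on $A$ if for all $x,y,z\in A$: (1) $\sigma(x,\cdot)=m$; (2) $\sigma(x,y)+\sigma(x,z)-\sigma(y,z)\le\sigma(x,x)$, with strict inequality whenever $z=y$ and $x\ne y$. *)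

theory Defs
  imports Main "HOL.Real"
begin

text \<open>The ground set A is represented by the (nonempty) type 'a.
  Functions A -> R are 'a => real, functions A^2 -> R are curried 'a => 'a => real.\<close>

definition linear_space :: "('b \<Rightarrow> real) set \<Rightarrow> bool" where
  "linear_space S \<longleftrightarrow>
     (\<forall>f\<in>S. \<forall>g\<in>S. (\<lambda>x. f x + g x) \<in> S) \<and>
     (\<forall>f\<in>S. \<forall>c::real. (\<lambda>x. c * f x) \<in> S)"

definition mean_setting ::
  "('a \<Rightarrow> real) set \<Rightarrow> (('a \<Rightarrow> real) \<Rightarrow> real) \<Rightarrow> ('a \<Rightarrow> 'a \<Rightarrow> real) set \<Rightarrow> bool" where
  "mean_setting B1 \<mu> B2 \<longleftrightarrow>
     linear_space B1 \<and> (\<forall>c. (\<lambda>_. c) \<in> B1) \<and>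
     (\<forall>f\<in>B1. \<forall>g\<in>B1. \<mu> (\<lambda>x. f x + g x) = \<mu> f + \<mu> g) \<and>
     (\<forall>f\<in>B1. \<forall>c. \<mu> (\<lambda>x. c * f x) = c * \<mu> f) \<and>
     (\<forall>c. \<mu> (\<lambda>_. c) = c) \<and>
     (\<forall>f\<in>B1. \<forall>g\<in>B1. (\<forall>x. f x \<ge> g x) \<longrightarrow> \<mu> f \<ge> \<mu> g) \<and>
     (\<forall>f\<in>B2. \<forall>g\<in>B2. (\<lambda>x y. f x y + g x y) \<in> B2) \<and>
     (\<forall>f\<in>B2. \<forall>c::real. (\<lambda>x y. c * f x y) \<in> B2) \<and>
     (\<forall>c. (\<lambda>_ _. c) \<in> B2) \<and>
     (\<forall>h\<in>B1. (\<lambda>x y. h x) \<in> B2 \<and> (\<lambda>x y. h y) \<in> B2) \<and>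
     (\<forall>f\<in>B2. (\<forall>x. f x \<in> B1) \<and> (\<lambda>x. \<mu> (f x)) \<in> B1 \<and> (\<lambda>x. f x x) \<in> B1)"

definition sigma_proximity ::
  "('a \<Rightarrow> real) set \<Rightarrow> (('a \<Rightarrow> real) \<Rightarrow> real) \<Rightarrow> ('a \<Rightarrow> 'a \<Rightarrow> real) set \<Rightarrow> real
    \<Rightarrow> ('a \<Rightarrow> 'a \<Rightarrow> real) \<Rightarrow> bool" where
  "sigma_proximity B1 \<mu> B2 m \<sigma> \<longleftrightarrow>
     \<sigma> \<in> B2 \<and>
     (\<forall>x. \<mu> (\<lambda>y. \<sigma> x y) = m) \<and>
     (\<forall>x y z. \<sigma> x y + \<sigma> x z - \<sigma> y z \<le> \<sigma> x x) \<and>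
     (\<forall>x y. x \<noteq> y \<longrightarrow> \<sigma> x y + \<sigma> x y - \<sigma> y y < \<sigma> x x)"

end

theory Submission
  imports Defs
begin

text \<open>Symmetry only needs the triangle-type inequality (2): taking z = x gives
  \<sigma>(x,y) \<le> \<sigma>(y,x), and exchanging x and y gives the reverse inequality.
  For egocentrism, average (2) over z with \<mu>: both rows have mean m, so the
  two averaged terms cancel and \<sigma>(x,y) \<le> \<sigma>(x,x) remains.\<close>

lemma sym_if_proximity_inequality:
  fixes \<sigma> :: "'a \<Rightarrow> 'a \<Rightarrow> real"
  assumes "\<forall>x y z. \<sigma> x y + \<sigma> x z - \<sigma> y z \<le> \<sigma> x x"
  shows "\<sigma> x y = \<sigma> y x"
proof -
  have "\<sigma> x y \<le> \<sigma> y x" using assms[rule_format, of x y x] by simp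
  moreover have "\<sigma> y x \<le> \<sigma> x y" using assms[rule_format, of y x y] by simp
  ultimately show ?thesis by simp
qed

lemma mean_setting_diff_mem:
  assumes "mean_setting B1 \<mu> B2" "f \<in> B1" "g \<in> B1"
  shows "(\<lambda>z. f z - g z) \<in> B1"
proof -
  have add_mem: "\<And>f g. f \<in> B1 \<Longrightarrow> g \<in> B1 \<Longrightarrow> (\<lambda>x. f x + g x) \<in> B1"
    and smult_mem: "\<And>f c. f \<in> B1 \<Longrightarrow> (\<lambda>x. c * f x) \<in> B1"
    using assms(1) unfolding mean_setting_def linear_space_def by blast+
  have "(\<lambda>z. f z + (-1) * g z) \<in> B1"
    using add_mem[OF assms(2) smult_mem[OF assms(3)]] .
  then show ?thesis by simp
qed

lemma mean_setting_mean_diff: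
  assumes "mean_setting B1 \<mu> B2" "f \<in> B1" "g \<in> B1"
  shows "\<mu> (\<lambda>z. f z - g z) = \<mu> f - \<mu> g"
proof -
  have add: "\<And>f g. f \<in> B1 \<Longrightarrow> g \<in> B1 \<Longrightarrow> \<mu> (\<lambda>x. f x + g x) = \<mu> f + \<mu> g"
    and smult: "\<And>f c. f \<in> B1 \<Longrightarrow> \<mu> (\<lambda>x. c * f x) = c * \<mu> f"
    and smult_mem: "\<And>f c. f \<in> B1 \<Longrightarrow> (\<lambda>x. c * f x) \<in> B1"
    using assms(1) unfolding mean_setting_def linear_space_def by blast+
  have "\<mu> (\<lambda>z. f z - g z) = \<mu> (\<lambda>z. f z + (-1) * g z)" by simp
  also have "\<dots> = \<mu> f + \<mu> (\<lambda>z. (-1) * g z)"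
    using add[OF assms(2) smult_mem[OF assms(3)]] .
  also have "\<dots> = \<mu> f - \<mu> g" using smult[OF assms(3), of "-1"] by simp
  finally show ?thesis .
qed

lemma mean_setting_mean_le_const:
  assumes "mean_setting B1 \<mu> B2" "h \<in> B1" "\<forall>z. h z \<le> d"
  shows "\<mu> h \<le> d"
proof -
  have mono: "\<And>f g. f \<in> B1 \<Longrightarrow> g \<in> B1 \<Longrightarrow> (\<forall>x. f x \<ge> g x) \<Longrightarrow> \<mu> f \<ge> \<mu> g"
    and const_mem: "(\<lambda>_. d) \<in> B1"
    using assms(1) unfolding mean_setting_def by blast+
  have "\<mu> h \<le> \<mu> (\<lambda>_. d)"
    using mono[OF const_mem assms(2)] assms(3) by blast
  also have "\<dots> = d" using assms(1) unfolding mean_setting_def by blast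
  finally show ?thesis .
qed

lemma sigma_proximity_egocentric:
  assumes "mean_setting B1 \<mu> B2" "sigma_proximity B1 \<mu> B2 m \<sigma>"
  shows "\<sigma> x y \<le> \<sigma> x x"
proof -
  have ineq: "\<forall>x y z. \<sigma> x y + \<sigma> x z - \<sigma> y z \<le> \<sigma> x x"
    and row_mean: "\<And>x. \<mu> (\<sigma> x) = m"
    and rows: "\<And>x. \<sigma> x \<in> B1"
    using assms unfolding sigma_proximity_def mean_setting_def by (auto simp: eta_contract_eq)
  have "m - m = \<mu> (\<lambda>z. \<sigma> x z - \<sigma> y z)"
    using mean_setting_mean_diff[OF assms(1) rows rows] row_mean by simp
  also have "\<dots> \<le> \<sigma> x x - \<sigma> x y"
  proof (rule mean_setting_mean_le_const[OF assms(1) mean_setting_diff_mem[OF assms(1) rows rows]])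
    show "\<forall>z. \<sigma> x z - \<sigma> y z \<le> \<sigma> x x - \<sigma> x y"
      using ineq by (metis add_diff_eq diff_le_eq le_diff_eq add.commute)
  qed
  finally show ?thesis by simp
qed

theorem proposition1:
  fixes B1 :: "('a \<Rightarrow> real) set" and \<mu> :: "('a \<Rightarrow> real) \<Rightarrow> real"
    and B2 :: "('a \<Rightarrow> 'a \<Rightarrow> real) set" and m :: real and \<sigma> :: "'a \<Rightarrow> 'a \<Rightarrow> real"
  assumes "mean_setting B1 \<mu> B2"
    and "sigma_proximity B1 \<mu> B2 m \<sigma>"
  shows "\<forall>x y. \<sigma> x y = \<sigma> y x \<and> \<sigma> x x \<ge> \<sigma> x y"
proof (intro allI conjI)
  fix x y
  show "\<sigma> x y = \<sigma> y x"
    using assms(2) unfolding sigma_proximity_def by (blast intro: sym_if_proximity_inequality)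
  show "\<sigma> x x \<ge> \<sigma> x y" using sigma_proximity_egocentric[OF assms] .
qed

end
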